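(* Let $K$ be a global function field, $\ell$ a rational prime coprime to the characteristic of $K$, and suppose a primitive $\ell$-th root of unity lies in $K$. Let $x,d,a\in K^*$ with $dx^\ell+d^\ell\neq0$ and $a+a^{-1}\neq0$, and let $H=K\left(\sqrt[\ell]{1+d^{-1}},\sqrt[\ell]{1+(dx^\ell+d^\ell)^{-1}},\sqrt[\ell]{1+(a+a^{-1})d^{-1}}\right)$. Then for every prime $\mathfrak{q}$ of $H$ which is not a pole of $d$ (i.e. $v_\mathfrak{q}(d)\ge0$): (i) $v_\mathfrak{q}(d)\equiv0\pmod\ell$; (ii) $v_\mathfrak{q}(dx^\ell+d^\ell)\equiv0\pmod\ell$; (iii) $v_\mathfrak{q}(a)\equiv0\pmod\ell$.
   Context: For a prime $\mathfrak{q}$ of a global function field, $v_\mathfrak{q}$ denotes the normalized discrete valuation. *)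

theory Defs
  imports "HOL-Computational_Algebra.Computational_Algebra"
begin

definition subfield_of :: "'a::field set \<Rightarrow> bool" where
  "subfield_of S \<longleftrightarrow> 0 \<in> S \<and> 1 \<in> S \<and>
     (\<forall>x\<in>S. \<forall>y\<in>S. x + y \<in> S \<and> x * y \<in> S) \<and>
     (\<forall>x\<in>S. - x \<in> S) \<and> (\<forall>x\<in>S. x \<noteq> 0 \<longrightarrow> inverse x \<in> S)"

text \<open>Subfield generated by a set (the prime field is gen_field {}).\<close>
definition gen_field :: "'a::field set \<Rightarrow> 'a set" where
  "gen_field S = \<Inter>{F. subfield_of F \<and> S \<subseteq> F}"

definition transcendental_over_prime_field :: "'a::field \<Rightarrow> bool" where
  "transcendental_over_prime_field t \<longleftrightarrow>
     (\<forall>q :: 'a poly. (\<forall>i. coeff q i \<in> gen_field {}) \<and> poly q t = 0 \<longrightarrow> q = 0)"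

definition finite_dim_over :: "'a::field set \<Rightarrow> 'a set \<Rightarrow> bool" where
  "finite_dim_over F K \<longleftrightarrow> (\<exists>B. finite B \<and> B \<subseteq> K \<and>
     (\<forall>z\<in>K. \<exists>c. (\<forall>b\<in>B. c b \<in> F) \<and> z = (\<Sum>b\<in>B. c b * b)))"

definition global_function_field :: "'a::field set \<Rightarrow> bool" where
  "global_function_field K \<longleftrightarrow> subfield_of K \<and> CHAR('a) > 0 \<and>
     (\<exists>t\<in>K. transcendental_over_prime_field t \<and> finite_dim_over (gen_field {t}) K)"

definition primitive_root_of_unity :: "nat \<Rightarrow> 'a::field \<Rightarrow> bool" where
  "primitive_root_of_unity n z \<longleftrightarrow> z ^ n = 1 \<and> (\<forall>k. 0 < k \<and> k < n \<longrightarrow> z ^ k \<noteq> 1)"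

text \<open>A prime q of the field H, represented by its normalized discrete valuation v_q
  (values on H - {0}; surjective onto the integers).\<close>
definition normalized_discrete_valuation :: "'a::field set \<Rightarrow> ('a \<Rightarrow> int) \<Rightarrow> bool" where
  "normalized_discrete_valuation H v \<longleftrightarrow>
     (\<forall>x\<in>H-{0}. \<forall>y\<in>H-{0}. v (x * y) = v x + v y) \<and>
     (\<forall>x\<in>H-{0}. \<forall>y\<in>H-{0}. x + y \<noteq> 0 \<longrightarrow> min (v x) (v y) \<le> v (x + y)) \<and>
     (\<forall>n::int. \<exists>x\<in>H-{0}. v x = n)"

end

theory Submission
  imports Defs
begin

text \<open>If \<open>y\<^sup>\<ell> = 1 + w\<close> with \<open>v w < 0\<close>, then \<open>v w = v (1 + w) = \<ell> v y\<close>, so \<open>\<ell>\<close> divides \<open>v w\<close>.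
  Applied to \<open>w = d\<inverse>\<close> and \<open>w = e\<inverse>\<close> with \<open>e = d x\<^sup>\<ell> + d\<^sup>\<ell>\<close>, this settles \<open>v d > 0\<close> and
  \<open>v e > 0\<close>; if \<open>v e < 0\<close>, then \<open>v d \<ge> 0\<close> forces \<open>v e = v (d x\<^sup>\<ell>) = v d + \<ell> v x\<close>.
  For \<open>a\<close> with \<open>v a \<noteq> 0\<close> one has \<open>v (a + a\<inverse>) = -\<bar>v a\<bar>\<close>, so \<open>w = (a + a\<inverse>) d\<inverse>\<close>
  has negative valuation \<open>-\<bar>v a\<bar> - v d\<close>.\<close>

lemma subfield_of_gen_field: "subfield_of (gen_field S)"
  unfolding gen_field_def subfield_of_def by auto

lemma subset_gen_field: "S \<subseteq> gen_field S"
  unfolding gen_field_def by auto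

lemma subfield_of_one: "subfield_of H \<Longrightarrow> 1 \<in> H"
  unfolding subfield_of_def by blast

lemma subfield_of_add: "subfield_of H \<Longrightarrow> x \<in> H \<Longrightarrow> y \<in> H \<Longrightarrow> x + y \<in> H"
  unfolding subfield_of_def by blast

lemma subfield_of_mult: "subfield_of H \<Longrightarrow> x \<in> H \<Longrightarrow> y \<in> H \<Longrightarrow> x * y \<in> H"
  unfolding subfield_of_def by blast

lemma subfield_of_uminus: "subfield_of H \<Longrightarrow> x \<in> H \<Longrightarrow> - x \<in> H"
  unfolding subfield_of_def by blast

lemma subfield_of_inverse: "subfield_of H \<Longrightarrow> x \<in> H \<Longrightarrow> inverse x \<in> H"
  unfolding subfield_of_def by (cases "x = 0") auto

lemma subfield_of_power: "subfield_of H \<Longrightarrow> x \<in> H \<Longrightarrow> x ^ n \<in> H"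
  by (induction n) (auto intro: subfield_of_one subfield_of_mult)

locale field_valuation =
  fixes H :: "'a::field set" and v :: "'a \<Rightarrow> int"
  assumes subfield: "subfield_of H"
    and valuation: "normalized_discrete_valuation H v"
begin

lemmas closed = subfield_of_one[OF subfield] subfield_of_add[OF subfield]
  subfield_of_mult[OF subfield] subfield_of_uminus[OF subfield]
  subfield_of_inverse[OF subfield] subfield_of_power[OF subfield]

lemma valuation_mult:
  "x \<in> H \<Longrightarrow> y \<in> H \<Longrightarrow> x \<noteq> 0 \<Longrightarrow> y \<noteq> 0 \<Longrightarrow> v (x * y) = v x + v y"
  using valuation unfolding normalized_discrete_valuation_def by blast

lemma valuation_add_ge_min:
  "x \<in> H \<Longrightarrow> y \<in> H \<Longrightarrow> x \<noteq> 0 \<Longrightarrow> y \<noteq> 0 \<Longrightarrow> x + y \<noteq> 0 \<Longrightarrow> min (v x) (v y) \<le> v (x + y)"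
  using valuation unfolding normalized_discrete_valuation_def by blast

lemma valuation_one: "v 1 = 0"
  using valuation_mult[of 1 1] closed by simp

lemma valuation_uminus:
  assumes "x \<in> H" "x \<noteq> 0"
  shows "v (- x) = v x"
proof -
  have "v ((-1) * (-1)) = v (-1) + v (-1)"
    by (rule valuation_mult) (auto intro: closed)
  then have "v (-1) = 0" using valuation_one by simp
  then show ?thesis using valuation_mult[of "-1" x] assms closed by simp
qed

lemma valuation_inverse: "x \<in> H \<Longrightarrow> x \<noteq> 0 \<Longrightarrow> v (inverse x) = - v x"
  using valuation_mult[of x "inverse x"] valuation_one closed by simp

lemma valuation_power: "x \<in> H \<Longrightarrow> x \<noteq> 0 \<Longrightarrow> v (x ^ n) = int n * v x"
proof (induction n)
  case 0
  then show ?case using valuation_one by simp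
next
  case (Suc n)
  have "v (x * x ^ n) = v x + v (x ^ n)"
    by (rule valuation_mult) (use Suc closed in auto)
  then show ?case using Suc by (simp add: algebra_simps)
qed

lemma valuation_add_of_less:
  assumes "x \<in> H" "y \<in> H" "x \<noteq> 0" "y \<noteq> 0" "v x < v y"
  shows "x + y \<noteq> 0" and "v (x + y) = v x"
proof -
  show sum_nonzero: "x + y \<noteq> 0"
  proof
    assume "x + y = 0"
    then have "y = - x" by (simp add: add_eq_0_iff2)
    then show False using valuation_uminus[of x] assms by simp
  qed
  have "min (v (x + y)) (v (- y)) \<le> v ((x + y) + - y)"
    by (rule valuation_add_ge_min) (use sum_nonzero assms closed in auto)
  then have "min (v (x + y)) (v y) \<le> v x" using valuation_uminus assms by simp
  moreover have "min (v x) (v y) \<le> v (x + y)"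
    using valuation_add_ge_min assms sum_nonzero by blast
  ultimately show "v (x + y) = v x" using assms by auto
qed

lemma valuation_add_of_less_right:
  assumes "x \<in> H" "y \<in> H" "x \<noteq> 0" "y \<noteq> 0" "x + y \<noteq> 0" "v (x + y) < v y"
  shows "v (x + y) = v x"
proof -
  have "min (v x) (v y) \<le> v (x + y)" using valuation_add_ge_min assms by blast
  then have "v x < v y" using assms by linarith
  then show ?thesis using valuation_add_of_less assms by blast
qed

lemma valuation_add_inverse:
  assumes "a \<in> H" "a \<noteq> 0" "v a \<noteq> 0"
  shows "v (a + inverse a) = - \<bar>v a\<bar>"
proof (cases "v a > 0")
  case True
  then have "v (inverse a) < v a" using valuation_inverse assms by simp
  then have "v (inverse a + a) = v (inverse a)"
    using valuation_add_of_less[of "inverse a" a] assms closed by simp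
  then show ?thesis using True valuation_inverse assms by (simp add: add.commute)
next
  case False
  then have "v a < v (inverse a)" using valuation_inverse assms by simp
  then have "v (a + inverse a) = v a"
    using valuation_add_of_less[of a "inverse a"] assms closed by simp
  then show ?thesis using False by simp
qed

lemma dvd_valuation_of_root_one_plus:
  assumes "y \<in> H" "w \<in> H" "w \<noteq> 0" "v w < 0" "y ^ l = 1 + w"
  shows "int l dvd v w"
proof -
  have "w + 1 \<noteq> 0" "v (w + 1) = v w"
    using valuation_add_of_less[of w 1] assms valuation_one closed by auto
  then have sum: "1 + w \<noteq> 0" "v (1 + w) = v w" by (simp_all add: add.commute)
  then have "y \<noteq> 0" using assms by (cases l) auto
  then have "v (y ^ l) = int l * v y" using valuation_power assms by blast
  then show ?thesis using sum assms by simp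
qed

lemma dvd_valuation_of_root_one_plus_inverse:
  assumes "y \<in> H" "z \<in> H" "z \<noteq> 0" "v z \<ge> 0" "y ^ l = 1 + inverse z"
  shows "int l dvd v z"
proof (cases "v z = 0")
  case False
  then have "v (inverse z) < 0" using valuation_inverse assms by simp
  then have "int l dvd v (inverse z)"
    using dvd_valuation_of_root_one_plus[of y "inverse z"] assms closed by simp
  then show ?thesis using valuation_inverse assms by simp
qed simp

end

theorem lemma3p7:
  fixes K :: "'a::field set" and l :: nat and x d a y1 y2 y3 :: 'a and v :: "'a \<Rightarrow> int"
  assumes "global_function_field K"
    and "prime l" and "coprime l CHAR('a)"
    and "\<exists>\<zeta>\<in>K. primitive_root_of_unity l \<zeta>"
    and "x \<in> K" and "d \<in> K" and "a \<in> K"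
    and "x \<noteq> 0" and "d \<noteq> 0" and "a \<noteq> 0"
    and "d * x ^ l + d ^ l \<noteq> 0" and "a + inverse a \<noteq> 0"
    and "y1 ^ l = 1 + inverse d"
    and "y2 ^ l = 1 + inverse (d * x ^ l + d ^ l)"
    and "y3 ^ l = 1 + (a + inverse a) * inverse d"
    and "normalized_discrete_valuation (gen_field (K \<union> {y1, y2, y3})) v"
    and "v d \<ge> 0"
  shows "int l dvd v d \<and> int l dvd v (d * x ^ l + d ^ l) \<and> int l dvd v a"
proof -
  define H where "H = gen_field (K \<union> {y1, y2, y3})"
  interpret field_valuation H v
    using subfield_of_gen_field assms(16) unfolding H_def by unfold_locales
  have "K \<union> {y1, y2, y3} \<subseteq> H" unfolding H_def by (rule subset_gen_field)
  then have in_H: "x \<in> H" "d \<in> H" "a \<in> H" "y1 \<in> H" "y2 \<in> H" "y3 \<in> H"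
    using assms by auto
  have dvd_d: "int l dvd v d"
    using dvd_valuation_of_root_one_plus_inverse in_H assms by blast
  define e where "e = d * x ^ l + d ^ l"
  have "v e = v d + int l * v x" if "v e < 0"
  proof -
    have "v (d ^ l) \<ge> 0" using valuation_power in_H assms by simp
    then have "v e = v (d * x ^ l)"
      using valuation_add_of_less_right[of "d * x ^ l" "d ^ l"] that in_H assms closed
      unfolding e_def by force
    then show ?thesis using valuation_mult valuation_power in_H assms closed by simp
  qed
  moreover have "int l dvd v e" if "v e \<ge> 0"
    using dvd_valuation_of_root_one_plus_inverse[of y2 e] that in_H assms closed
    unfolding e_def by simp
  ultimately have dvd_e: "int l dvd v e" using dvd_d by force
  have "int l dvd \<bar>v a\<bar>" if "v a \<noteq> 0"
  proof -
    let ?w = "(a + inverse a) * inverse d"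
    have "v ?w = - \<bar>v a\<bar> - v d"
      using valuation_mult valuation_inverse valuation_add_inverse that in_H assms closed by simp
    moreover have "int l dvd v ?w"
      using dvd_valuation_of_root_one_plus[of y3 ?w] calculation that in_H assms closed by simp
    ultimately show ?thesis using dvd_d by (metis diff_add_cancel dvd_add dvd_minus_iff)
  qed
  then show ?thesis using dvd_d dvd_e unfolding e_def by (cases "v a = 0") auto
qed

end
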